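(* Let $d\ge1$, $R_y>0$, $\sigma>0$. Define $t_1(\boldsymbol x)=\boldsymbol x$ and $t_2(\boldsymbol x)\in\mathbb{R}^{d_2}$ as the vector with entries $x_i^2$ ($1\le i\le d$) and $\sqrt2\,x_ix_j$ ($1\le i<j\le d$), $d_2=d(d+1)/2$. For records $(\boldsymbol x,y)$ with $\|\boldsymbol x\|_2\le 1$ and $y$ a nonnegative integer with $y\le R_y$, consider $\mathcal M(\boldsymbol x,y)=\big(t_1(\boldsymbol x),t_2(\boldsymbol x),y\,t_1(\boldsymbol x),y\,t_2(\boldsymbol x)\big)+\mathcal N(0,\sigma^2 I)$. Then the optimal $(\epsilon,\delta)$-DP guarantee for $\mathcal M$ (with respect to replacing one record by another satisfying the same constraints) is obtained by considering the Gaussian mechanism with noise variance $\sigma^2$ and $L_2$-sensitivity $\Delta=\sqrt{4\tfrac12\,(1+R_y^2)}=\sqrt{\tfrac92(1+R_y^2)}$; i.e., $\mathcal M$ is $(\epsilon,\delta)$-DP whenever $\Phi(\frac{\Delta}{2\sigma}-\frac{\epsilon\sigma}{\Delta})-e^{\epsilon}\Phi(-\frac{\Delta}{2\sigma}-\frac{\epsilon\sigma}{\Delta})\le\delta$.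
   Context: A randomized mechanism $\mathcal M$ is $(\epsilon,\delta)$-DP if for all neighbouring inputs $D\sim D'$ (differing by replacement of one record) and all measurable $O$, $\Pr[\mathcal M(D)\in O]\le e^{\epsilon}\Pr[\mathcal M(D')\in O]+\delta$. The Gaussian mechanism with $L_2$-sensitivity $\Delta$ and noise $\mathcal N(0,\sigma^2 I)$ is $(\epsilon,\delta)$-DP iff $\Phi(\frac{\Delta}{2\sigma}-\frac{\epsilon\sigma}{\Delta})-e^{\epsilon}\Phi(-\frac{\Delta}{2\sigma}-\frac{\epsilon\sigma}{\Delta})\le\delta$, $\Phi$ the standard normal CDF. *)

theory Defs
  imports "HOL-Probability.Probability"
begin

text \<open>Feature maps. A point x of R^d is a function nat => real whose
coordinates 0..d-1 are used.\<close>

definition t1 :: "nat \<Rightarrow> (nat \<Rightarrow> real) \<Rightarrow> real list" where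
  "t1 d x = map x [0..<d]"

definition t2 :: "nat \<Rightarrow> (nat \<Rightarrow> real) \<Rightarrow> real list" where
  "t2 d x = concat (map (\<lambda>i. map (\<lambda>j. if i = j then (x i)\<^sup>2 else sqrt 2 * x i * x j) [i..<d]) [0..<d])"

definition feature :: "nat \<Rightarrow> (nat \<Rightarrow> real) \<Rightarrow> real \<Rightarrow> real list" where
  "feature d x y = t1 d x @ t2 d x @ map (\<lambda>v. y * v) (t1 d x) @ map (\<lambda>v. y * v) (t2 d x)"

definition gauss_mech :: "real \<Rightarrow> real list \<Rightarrow> (nat \<Rightarrow> real) measure" where
  "gauss_mech \<sigma> v =
     distr (PiM {..<length v} (\<lambda>_. density lborel (normal_density 0 \<sigma>)))
           (PiM {..<length v} (\<lambda>_. borel))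
           (\<lambda>z. \<lambda>i\<in>{..<length v}. v ! i + z i)"

text \<open>(eps,delta)-DP for a mechanism whose input is a single record from Rec;
neighbouring inputs = any two records of Rec (replacement of the record).\<close>
definition DP :: "'a set \<Rightarrow> ('a \<Rightarrow> 'b measure) \<Rightarrow> real \<Rightarrow> real \<Rightarrow> bool" where
  "DP Rec M \<epsilon> \<delta> \<longleftrightarrow>
     (\<forall>D\<in>Rec. \<forall>D'\<in>Rec. \<forall>S\<in>sets (M D).
        measure (M D) S \<le> exp \<epsilon> * measure (M D') S + \<delta>)"

definition Phi :: "real \<Rightarrow> real" where
  "Phi t = (LBINT u:{..t}. std_normal_density u)"

definition records :: "nat \<Rightarrow> real \<Rightarrow> ((nat \<Rightarrow> real) \<times> real) set" where
  "records d Ry = {(x, y). sqrt (\<Sum>i<d. (x i)\<^sup>2) \<le> 1 \<and> y \<in> \<nat> \<and> y \<le> Ry}"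

end

theory Submission
  imports Defs
begin

(* For two records the mechanism outputs Gaussians N(v, sigma^2 I) and N(w, sigma^2 I).
   For such a pair, P_v(S) - e^eps P_w(S) is largest on the likelihood-ratio set
   {e^eps q < p}, which is a halfspace orthogonal to v - w; its two probabilities are
   values of Phi, and the resulting bound is increasing in r = |v - w|.
   It remains to bound the sensitivity. The feature map is that of the kernel
   (1 + y y') (c + c^2) with c = <x, x'>, so the squared distance of two feature
   vectors is (1 + y^2) k(|x|^2) + (1 + y'^2) k(|x'|^2) - 2 (1 + y y') k(c) with
   k(c) = c + c^2.  On the unit ball k(|x|^2) <= 2 and always k(c) >= -1/4, which
   gives 4 (1 + R_y^2) + (1 + R_y^2)/2. *)

section \<open>The Gaussian distribution\<close>

lemma measure_density_eq_integral:
  assumes f: "integrable M f" and nonneg: "\<And>x. 0 \<le> f x" and A: "A \<in> sets M"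
  shows "measure (density M (\<lambda>x. ennreal (f x))) A = (\<integral>x. indicator A x * f x \<partial>M)"
proof -
  have [measurable]: "f \<in> borel_measurable M" using f by auto
  have "emeasure (density M (\<lambda>x. ennreal (f x))) A = (\<integral>\<^sup>+x. ennreal (indicator A x * f x) \<partial>M)"
    using A by (subst emeasure_density) (auto intro!: nn_integral_cong simp: indicator_def)
  also have "\<dots> = ennreal (\<integral>x. indicator A x * f x \<partial>M)"
    using integrable_mult_indicator[OF A f] nonneg by (intro nn_integral_eq_integral) auto
  finally show ?thesis
    using nonneg by (simp add: measure_def integral_nonneg_AE)
qed

lemma measure_density_diff_le_superlevel:
  fixes c :: real
  assumes p: "integrable M p" "\<And>x. 0 \<le> p x" and q: "integrable M q" "\<And>x. 0 \<le> q x"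
    and S: "S \<in> sets M"
  defines "A \<equiv> {x \<in> space M. c * q x < p x}"
  shows "measure (density M (\<lambda>x. ennreal (p x))) S - c * measure (density M (\<lambda>x. ennreal (q x))) S
       \<le> measure (density M (\<lambda>x. ennreal (p x))) A - c * measure (density M (\<lambda>x. ennreal (q x))) A"
proof -
  have [measurable]: "p \<in> borel_measurable M" "q \<in> borel_measurable M" using p q by auto
  have diff: "measure (density M (\<lambda>x. ennreal (p x))) B - c * measure (density M (\<lambda>x. ennreal (q x))) B
      = (\<integral>x. indicator B x * (p x - c * q x) \<partial>M)" if "B \<in> sets M" for B
  proof -
    have "(\<integral>x. indicator B x * (p x - c * q x) \<partial>M)
        = (\<integral>x. indicator B x * p x - c * (indicator B x * q x) \<partial>M)"
      by (rule Bochner_Integration.integral_cong) (auto simp: algebra_simps)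
    also have "\<dots> = (\<integral>x. indicator B x * p x \<partial>M) - c * (\<integral>x. indicator B x * q x \<partial>M)"
      using integrable_mult_indicator[OF that p(1)] integrable_mult_indicator[OF that q(1)]
      by (subst Bochner_Integration.integral_diff) auto
    finally show ?thesis
      using that p q by (simp add: measure_density_eq_integral)
  qed
  have integrable: "integrable M (\<lambda>x. indicator B x * (p x - c * q x))" if "B \<in> sets M" for B
    using integrable_mult_indicator[OF that, of "\<lambda>x. p x - c * q x"] p q by simp
  have "A \<in> sets M" unfolding A_def by measurable
  show ?thesis
    unfolding diff[OF S] diff[OF \<open>A \<in> sets M\<close>]
    by (rule integral_mono[OF integrable[OF S] integrable[OF \<open>A \<in> sets M\<close>]])
      (auto simp: A_def indicator_def)
qed

lemma indep_vars_PiM_components: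
  assumes "I \<noteq> {}" and M: "\<And>i. i \<in> I \<Longrightarrow> prob_space (M i)"
  shows "prob_space.indep_vars (PiM I M) M (\<lambda>i x. x i) I"
proof -
  interpret P: prob_space "PiM I M" by (rule prob_space_PiM[OF M])
  show ?thesis
  proof (subst P.indep_vars_iff_distr_eq_PiM'[OF assms(1)])
    have "distr (PiM I M) (PiM I M) (\<lambda>x. \<lambda>i\<in>I. x i) = distr (PiM I M) (PiM I M) (\<lambda>x. x)"
      by (rule distr_cong) (auto simp: space_PiM PiE_def extensional_restrict)
    also have "\<dots> = PiM I M" by (rule distr_id)
    also have "\<dots> = PiM I (\<lambda>i. distr (PiM I M) (M i) (\<lambda>x. x i))"
      by (rule PiM_cong) (auto intro!: distr_PiM_component[symmetric] M)
    finally show "distr (PiM I M) (PiM I M) (\<lambda>x. \<lambda>i\<in>I. x i) = PiM I (\<lambda>i. distr (PiM I M) (M i) (\<lambda>x. x i))" .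
  qed auto
qed

lemma Phi_eq_add_interval_integral:
  assumes "a \<le> u"
  shows "Phi u = Phi a + (LBINT t=a..u. std_normal_density t)"
proof -
  have "{..u} = {..a} \<union> {a<..u}" using assms by auto
  then have "Phi u = (LBINT t:{..a} \<union> {a<..u}. std_normal_density t)" by (simp add: Phi_def)
  also have "\<dots> = Phi a + (LBINT t:{a<..u}. std_normal_density t)"
  proof -
    have "set_integrable lborel A std_normal_density" if "A \<in> sets lborel" for A
      unfolding set_integrable_def using that by (intro integrable_mult_indicator) auto
    then show ?thesis unfolding Phi_def by (subst set_integral_Un) auto
  qed
  finally show ?thesis using assms by (simp add: interval_integral_Ioc)
qed

lemma Phi_has_real_derivative: "(Phi has_real_derivative std_normal_density x) (at x)"
proof -
  define a b where "a = x - 1" and "b = x + 1"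
  have "continuous_on {a..b} std_normal_density"
    unfolding normal_density_def by (intro continuous_intros) auto
  then have "((\<lambda>u. LBINT t=a..u. std_normal_density t) has_vector_derivative std_normal_density x)
      (at x within {a..b})"
    by (rule interval_integral_FTC2[rotated 2]) (auto simp: a_def b_def)
  then have "((\<lambda>u. Phi a + (LBINT t=a..u. std_normal_density t)) has_vector_derivative
      std_normal_density x) (at x within {a..b})"
    by (auto intro!: derivative_eq_intros)
  then have "(Phi has_vector_derivative std_normal_density x) (at x within {a..b})"
    by (rule has_vector_derivative_weaken[where S="{a..b}"])
      (auto simp: a_def b_def Phi_eq_add_interval_integral)
  then have "(Phi has_vector_derivative std_normal_density x) (at x within {a<..<b})"
    by (rule has_vector_derivative_within_subset) auto
  then have "(Phi has_vector_derivative std_normal_density x) (at x)"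
    by (subst (asm) has_vector_derivative_within_open) (auto simp: a_def b_def)
  then show ?thesis by (simp add: has_real_derivative_iff_has_vector_derivative)
qed

lemma measure_std_normal_lessThan:
  "measure (density lborel std_normal_density) {..<k} = Phi k"
proof -
  have "measure (density lborel std_normal_density) {..<k}
      = (\<integral>x. indicator {..<k} x * std_normal_density x \<partial>lborel)"
    by (rule measure_density_eq_integral) auto
  also have "\<dots> = (LBINT x:{..<k}. std_normal_density x)"
    by (simp add: set_lebesgue_integral_def)
  also have "\<dots> = (LBINT x:{..k}. std_normal_density x)"
    by (rule set_integral_discrete_difference[where X="{k}"]) auto
  finally show ?thesis by (simp add: Phi_def)
qed

abbreviation normal_measure :: "real \<Rightarrow> real \<Rightarrow> real measure" where
  "normal_measure \<mu> \<sigma> \<equiv> density lborel (normal_density \<mu> \<sigma>)"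

lemma product_sigma_finite_normal_measure:
  "\<sigma> > 0 \<Longrightarrow> product_sigma_finite (\<lambda>i. normal_measure (c i) \<sigma>)"
  unfolding product_sigma_finite_def
  using prob_space_normal_density prob_space_imp_sigma_finite by blast

lemma emeasure_normal_measure_shift:
  assumes "\<sigma> > 0" and "B \<in> sets borel"
  shows "emeasure (normal_measure 0 \<sigma>) {z. c + z \<in> B} = emeasure (normal_measure c \<sigma>) B"
proof -
  interpret prob_space "normal_measure 0 \<sigma>" by (rule prob_space_normal_density[OF assms(1)])
  have "distributed (normal_measure 0 \<sigma>) lborel (\<lambda>x. x) (normal_density 0 \<sigma>)"
    unfolding distributed_def by (simp add: distr_id2)
  from normal_density_affine[OF this assms(1), of 1 c]
  have "normal_measure c \<sigma> = distr (normal_measure 0 \<sigma>) lborel (\<lambda>x. c + x)"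
    by (simp add: distributed_def)
  then show ?thesis
    using assms(2) by (simp add: emeasure_distr vimage_def)
qed

lemma PiM_normal_measure_eq_density:
  assumes I: "finite I" and sigma_pos: "\<sigma> > 0"
  shows "PiM I (\<lambda>i. normal_measure (c i) \<sigma>) =
     density (PiM I (\<lambda>_. lborel)) (\<lambda>x. ennreal (\<Prod>i\<in>I. normal_density (c i) \<sigma> (x i)))"
    (is "_ = density ?L ?p")
proof -
  interpret P: product_sigma_finite "\<lambda>i. normal_measure (c i) \<sigma>"
    by (rule product_sigma_finite_normal_measure[OF sigma_pos])
  interpret L: product_sigma_finite "\<lambda>_::'i. lborel :: real measure"
    unfolding product_sigma_finite_def by (simp add: lborel.sigma_finite_measure_axioms)
  show ?thesis
  proof (rule P.PiM_eqI[symmetric, OF I])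
    show "sets (density ?L ?p) = sets (PiM I (\<lambda>i. normal_measure (c i) \<sigma>))"
      by (simp cong: sets_PiM_cong)
    fix A assume A: "\<And>i. i \<in> I \<Longrightarrow> A i \<in> sets (normal_measure (c i) \<sigma>)"
    have "emeasure (density ?L ?p) (Pi\<^sub>E I A) = (\<integral>\<^sup>+x. ?p x * indicator (Pi\<^sub>E I A) x \<partial>?L)"
      using A by (subst emeasure_density) (auto intro!: sets_PiM_I_finite I)
    also have "\<dots> = (\<integral>\<^sup>+x. (\<Prod>i\<in>I. ennreal (normal_density (c i) \<sigma> (x i)) * indicator (A i) (x i)) \<partial>?L)"
    proof (rule nn_integral_cong)
      fix x assume "x \<in> space ?L"
      then have "indicator (Pi\<^sub>E I A) x = (\<Prod>i\<in>I. indicator (A i) (x i) :: ennreal)"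
        using I by (auto simp: space_PiM indicator_def PiE_def Pi_def)
      then show "?p x * indicator (Pi\<^sub>E I A) x =
          (\<Prod>i\<in>I. ennreal (normal_density (c i) \<sigma> (x i)) * indicator (A i) (x i))"
        by (simp add: prod.distrib prod_ennreal)
    qed
    also have "\<dots> = (\<Prod>i\<in>I. \<integral>\<^sup>+t. ennreal (normal_density (c i) \<sigma> t) * indicator (A i) t \<partial>lborel)"
      using A by (subst L.product_nn_integral_prod) (auto simp: I)
    also have "\<dots> = (\<Prod>i\<in>I. emeasure (normal_measure (c i) \<sigma>) (A i))"
      using A by (intro prod.cong refl) (simp add: emeasure_density)
    finally show "emeasure (density ?L ?p) (Pi\<^sub>E I A) = (\<Prod>i\<in>I. emeasure (normal_measure (c i) \<sigma>) (A i))" .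
  qed
qed

lemma integrable_prod_normal_density:
  assumes I: "finite I" and sigma_pos: "\<sigma> > 0"
  shows "integrable (PiM I (\<lambda>_. lborel)) (\<lambda>x. \<Prod>i\<in>I. normal_density (c i) \<sigma> (x i))"
proof (rule integrableI_nonneg)
  let ?N = "PiM I (\<lambda>i. normal_measure (c i) \<sigma>)"
  interpret prob_space ?N by (rule prob_space_PiM) (rule prob_space_normal_density[OF sigma_pos])
  have "(\<integral>\<^sup>+x. ennreal (\<Prod>i\<in>I. normal_density (c i) \<sigma> (x i)) \<partial>PiM I (\<lambda>_. lborel)) = emeasure ?N (space ?N)"
    unfolding PiM_normal_measure_eq_density[OF assms]
    by (subst emeasure_density) (auto intro!: nn_integral_cong)
  then show "(\<integral>\<^sup>+x. ennreal (\<Prod>i\<in>I. normal_density (c i) \<sigma> (x i)) \<partial>PiM I (\<lambda>_. lborel)) < \<infinity>"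
    by (simp add: emeasure_space_1)
qed (auto intro!: AE_I2 prod_nonneg)

lemma prod_normal_density_less_iff:
  fixes v w x :: "nat \<Rightarrow> real"
  assumes sigma_pos: "\<sigma> > 0"
  shows "exp \<epsilon> * (\<Prod>i<n. normal_density (w i) \<sigma> (x i)) < (\<Prod>i<n. normal_density (v i) \<sigma> (x i))
     \<longleftrightarrow> \<sigma>\<^sup>2 * \<epsilon> + ((\<Sum>i<n. (v i)\<^sup>2) - (\<Sum>i<n. (w i)\<^sup>2)) / 2 < (\<Sum>i<n. (v i - w i) * x i)"
proof -
  define K where "K = (1 / sqrt (2 * pi * \<sigma>\<^sup>2)) ^ n"
  define Sv where "Sv = (\<Sum>i<n. (x i - v i)\<^sup>2)"
  define Sw where "Sw = (\<Sum>i<n. (x i - w i)\<^sup>2)"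
  have prod: "(\<Prod>i<n. normal_density (c i) \<sigma> (x i)) = K * exp (- (\<Sum>i<n. (x i - c i)\<^sup>2) / (2 * \<sigma>\<^sup>2))"
    for c :: "nat \<Rightarrow> real"
    unfolding normal_density_def prod.distrib K_def
    by (simp add: exp_sum[symmetric] sum_divide_distrib[symmetric] sum_negf)
  have "K > 0" using sigma_pos by (simp add: K_def)
  then have "exp \<epsilon> * (\<Prod>i<n. normal_density (w i) \<sigma> (x i)) < (\<Prod>i<n. normal_density (v i) \<sigma> (x i))
      \<longleftrightarrow> \<epsilon> - Sw / (2 * \<sigma>\<^sup>2) < - Sv / (2 * \<sigma>\<^sup>2)"
    unfolding prod Sv_def[symmetric] Sw_def[symmetric]
    by (simp add: mult.left_commute[of "exp \<epsilon>"] mult_exp_exp)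
  also have "\<dots> \<longleftrightarrow> \<epsilon> < (Sw - Sv) / (2 * \<sigma>\<^sup>2)"
    by (auto simp: diff_divide_distrib)
  also have "\<dots> \<longleftrightarrow> 2 * \<sigma>\<^sup>2 * \<epsilon> < Sw - Sv"
    using sigma_pos by (simp add: pos_less_divide_eq mult.commute)
  also have "Sw - Sv = 2 * (\<Sum>i<n. (v i - w i) * x i) - (\<Sum>i<n. (v i)\<^sup>2) + (\<Sum>i<n. (w i)\<^sup>2)"
    unfolding Sv_def Sw_def sum_subtractf[symmetric] sum_distrib_left sum.distrib[symmetric]
    by (intro sum.cong refl) (simp add: power2_eq_square algebra_simps)
  finally show ?thesis by (simp add: field_simps)
qed

lemma PiM_normal_measure_component_distributed:
  assumes "\<sigma> > 0" and "i < n"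
  shows "distributed (PiM {..<n} (\<lambda>i. normal_measure (c i) \<sigma>)) lborel (\<lambda>x. x i) (normal_density (c i) \<sigma>)"
proof -
  let ?M = "PiM {..<n} (\<lambda>i. normal_measure (c i) \<sigma>)"
  have "distr ?M lborel (\<lambda>x. x i) = distr ?M (normal_measure (c i) \<sigma>) (\<lambda>x. x i)"
    by (rule distr_cong) auto
  also have "\<dots> = normal_measure (c i) \<sigma>"
    using assms by (intro distr_PiM_component prob_space_normal_density) auto
  finally show ?thesis unfolding distributed_def using assms by auto
qed

lemma PiM_normal_measure_linear_distributed:
  fixes c u :: "nat \<Rightarrow> real"
  assumes sigma_pos: "\<sigma> > 0" and u: "0 < (\<Sum>i<n. (u i)\<^sup>2)"
  shows "distributed (PiM {..<n} (\<lambda>i. normal_measure (c i) \<sigma>)) lborel (\<lambda>x. \<Sum>i<n. u i * x i)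
           (normal_density (\<Sum>i<n. u i * c i) (\<sigma> * sqrt (\<Sum>i<n. (u i)\<^sup>2)))"
proof -
  define M where "M = PiM {..<n} (\<lambda>i. normal_measure (c i) \<sigma>)"
  interpret M: prob_space M
    unfolding M_def by (rule prob_space_PiM) (rule prob_space_normal_density[OF sigma_pos])
  \<comment> \<open>The affine image of a normal variable is normal only for a nonzero factor,
      so the sum is taken over the support J of u.\<close>
  define J where "J = {i. i < n \<and> u i \<noteq> 0}"
  have restrict: "(\<Sum>i\<in>J. g i) = (\<Sum>i<n. g i)" if "\<And>i. u i = 0 \<Longrightarrow> g i = 0" for g :: "nat \<Rightarrow> real"
    using that by (intro sum.mono_neutral_left) (auto simp: J_def)
  have "J \<noteq> {}"
    using u restrict[of "\<lambda>i. (u i)\<^sup>2"] by (cases "J = {}") auto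
  then have J: "finite J" "J \<noteq> {}" "J \<subseteq> {..<n}"
    by (auto simp: J_def)
  have "M.indep_vars (\<lambda>i. normal_measure (c i) \<sigma>) (\<lambda>i x. x i) {..<n}"
    unfolding M_def using J by (intro indep_vars_PiM_components prob_space_normal_density sigma_pos) auto
  then have indep: "M.indep_vars (\<lambda>_. borel) (\<lambda>i x. 0 + u i * x i) J"
    by (rule M.indep_vars_subset[OF M.indep_vars_compose2 J(3)]) auto
  have "distributed M lborel (\<lambda>x. 0 + u i * x i) (normal_density (0 + u i * c i) (\<bar>u i\<bar> * \<sigma>))"
    if "i \<in> J" for i
    using that sigma_pos unfolding M_def
    by (intro M.normal_density_affine[unfolded M_def] PiM_normal_measure_component_distributed)
      (auto simp: J_def)
  then have "distributed M lborel (\<lambda>x. \<Sum>i\<in>J. 0 + u i * x i)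
      (normal_density (\<Sum>i\<in>J. 0 + u i * c i) (sqrt (\<Sum>i\<in>J. (\<bar>u i\<bar> * \<sigma>)\<^sup>2)))"
    using sigma_pos by (intro M.sum_indep_normal[OF J(1,2) indep]) (auto simp: J_def)
  moreover have "(\<Sum>i\<in>J. (\<bar>u i\<bar> * \<sigma>)\<^sup>2) = \<sigma>\<^sup>2 * (\<Sum>i<n. (u i)\<^sup>2)"
    by (simp add: restrict power_mult_distrib sum_distrib_left mult.commute)
  ultimately show ?thesis
    using sigma_pos by (simp add: M_def restrict real_sqrt_mult)
qed

lemma PiM_normal_measure_halfspace:
  fixes c u :: "nat \<Rightarrow> real"
  assumes sigma_pos: "\<sigma> > 0" and u: "0 < (\<Sum>i<n. (u i)\<^sup>2)"
  defines "M \<equiv> PiM {..<n} (\<lambda>i. normal_measure (c i) \<sigma>)"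
  shows "measure M {x \<in> space M. t < (\<Sum>i<n. u i * x i)}
     = Phi (((\<Sum>i<n. u i * c i) - t) / (\<sigma> * sqrt (\<Sum>i<n. (u i)\<^sup>2)))"
proof -
  interpret M: prob_space M
    unfolding M_def by (rule prob_space_PiM) (rule prob_space_normal_density[OF sigma_pos])
  define Y where "Y x = (\<Sum>i<n. u i * x i)" for x :: "nat \<Rightarrow> real"
  define m where "m = (\<Sum>i<n. u i * c i)"
  define s where "s = \<sigma> * sqrt (\<Sum>i<n. (u i)\<^sup>2)"
  have "s > 0" using sigma_pos u by (simp add: s_def)
  have "distributed M lborel Y (normal_density m s)"
    unfolding M_def Y_def m_def s_def by (rule PiM_normal_measure_linear_distributed[OF sigma_pos u])
  then have "distributed M lborel (\<lambda>x. m / s + (- 1 / s) * Y x)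
      (normal_density (m / s + (- 1 / s) * m) (\<bar>- 1 / s\<bar> * s))"
    using \<open>s > 0\<close> by (intro M.normal_density_affine) auto
  then have standard: "distr M lborel (\<lambda>x. m / s - Y x / s) = density lborel std_normal_density"
    and standard_measurable: "(\<lambda>x. m / s - Y x / s) \<in> measurable M lborel"
    using \<open>s > 0\<close> by (auto simp: distributed_def)
  have "{x \<in> space M. t < Y x} = (\<lambda>x. m / s - Y x / s) -` {..<(m - t) / s} \<inter> space M"
    using \<open>s > 0\<close> by (auto simp: field_simps)
  then have "measure M {x \<in> space M. t < Y x}
      = measure (distr M lborel (\<lambda>x. m / s - Y x / s)) {..<(m - t) / s}"
    by (simp add: measure_distr[OF standard_measurable])
  also have "\<dots> = Phi ((m - t) / s)"
    unfolding standard by (rule measure_std_normal_lessThan)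
  finally show ?thesis by (simp add: Y_def m_def s_def)
qed

section \<open>The privacy profile of the Gaussian mechanism\<close>

definition gauss_delta :: "real \<Rightarrow> real \<Rightarrow> real \<Rightarrow> real" where
  "gauss_delta \<epsilon> \<sigma> r =
     Phi (r / (2 * \<sigma>) - \<epsilon> * \<sigma> / r) - exp \<epsilon> * Phi (- r / (2 * \<sigma>) - \<epsilon> * \<sigma> / r)"

lemma gauss_delta_mono:
  assumes "\<sigma> > 0" "0 < r" "r \<le> r'"
  shows "gauss_delta \<epsilon> \<sigma> r \<le> gauss_delta \<epsilon> \<sigma> r'"
proof (rule DERIV_nonneg_imp_nondecreasing[OF assms(3)])
  fix s assume "r \<le> s" "s \<le> r'"
  then have "s > 0" using assms by auto
  define a where "a = s / (2 * \<sigma>) - \<epsilon> * \<sigma> / s"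
  define b where "b = - s / (2 * \<sigma>) - \<epsilon> * \<sigma> / s"
  define D where "D = std_normal_density a * (1 / (2 * \<sigma>) + \<epsilon> * \<sigma> / s\<^sup>2)
    - exp \<epsilon> * (std_normal_density b * (- 1 / (2 * \<sigma>) + \<epsilon> * \<sigma> / s\<^sup>2))"
  have "(gauss_delta \<epsilon> \<sigma> has_real_derivative D) (at s)"
    unfolding gauss_delta_def D_def a_def b_def using \<open>s > 0\<close> assms
    by (auto intro!: derivative_eq_intros DERIV_chain2[OF Phi_has_real_derivative]
        simp: power2_eq_square field_simps)
  have "b\<^sup>2 - a\<^sup>2 = 2 * \<epsilon>"
    unfolding a_def b_def using \<open>s > 0\<close> assms by (simp add: power2_eq_square field_simps)
  then have "\<epsilon> + - b\<^sup>2 / 2 = - a\<^sup>2 / 2" by simp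
  then have "exp \<epsilon> * exp (- b\<^sup>2 / 2) = exp (- a\<^sup>2 / 2)"
    by (simp only: mult_exp_exp)
  then have "std_normal_density a = exp \<epsilon> * std_normal_density b"
    by (metis mult.left_commute std_normal_density_def)
  then have "D = std_normal_density a / \<sigma>"
    unfolding D_def using assms by (simp add: field_simps)
  then have "D \<ge> 0" using assms by simp
  with \<open>(gauss_delta \<epsilon> \<sigma> has_real_derivative D) (at s)\<close>
  show "\<exists>D. (gauss_delta \<epsilon> \<sigma> has_real_derivative D) (at s) \<and> D \<ge> 0" by blast
qed

lemma gauss_mech_eq_PiM:
  assumes sigma_pos: "\<sigma> > 0"
  shows "gauss_mech \<sigma> v = PiM {..<length v} (\<lambda>i. normal_measure (v!i) \<sigma>)"
proof -
  let ?I = "{..<length v}" and ?Z = "PiM {..<length v} (\<lambda>_. normal_measure 0 \<sigma>)"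
  let ?shift = "\<lambda>z. \<lambda>i\<in>?I. v ! i + z i"
  interpret P: product_sigma_finite "\<lambda>i. normal_measure (v!i) \<sigma>"
    by (rule product_sigma_finite_normal_measure[OF sigma_pos])
  interpret Z: product_sigma_finite "\<lambda>i::nat. normal_measure 0 \<sigma>"
    by (rule product_sigma_finite_normal_measure[OF sigma_pos])
  have meas: "?shift \<in> measurable ?Z (PiM ?I (\<lambda>_. borel))"
    by measurable
  show ?thesis unfolding gauss_mech_def
  proof (rule P.PiM_eqI)
    show "sets (distr ?Z (PiM ?I (\<lambda>_. borel)) ?shift) = sets (PiM ?I (\<lambda>i. normal_measure (v!i) \<sigma>))"
      by (simp cong: sets_PiM_cong)
    fix A assume A: "\<And>i. i \<in> ?I \<Longrightarrow> A i \<in> sets (normal_measure (v!i) \<sigma>)"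
    have "emeasure (distr ?Z (PiM ?I (\<lambda>_. borel)) ?shift) (Pi\<^sub>E ?I A)
       = emeasure ?Z (?shift -` (Pi\<^sub>E ?I A) \<inter> space ?Z)"
      using A by (subst emeasure_distr[OF meas]) (auto intro!: sets_PiM_I_finite)
    also have "?shift -` (Pi\<^sub>E ?I A) \<inter> space ?Z = Pi\<^sub>E ?I (\<lambda>i. {z. v!i + z \<in> A i})"
      by (auto simp: space_PiM PiE_def Pi_def extensional_def)
    also have "emeasure ?Z (Pi\<^sub>E ?I (\<lambda>i. {z. v!i + z \<in> A i}))
       = (\<Prod>i\<in>?I. emeasure (normal_measure 0 \<sigma>) {z. v!i + z \<in> A i})"
      using A by (subst Z.emeasure_PiM) auto
    also have "\<dots> = (\<Prod>i\<in>?I. emeasure (normal_measure (v!i) \<sigma>) (A i))"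
      using A by (intro prod.cong refl emeasure_normal_measure_shift[OF sigma_pos]) auto
    finally show "emeasure (distr ?Z (PiM ?I (\<lambda>_. borel)) ?shift) (Pi\<^sub>E ?I A)
       = (\<Prod>i\<in>?I. emeasure (normal_measure (v!i) \<sigma>) (A i))" .
  qed simp
qed

lemma prob_space_gauss_mech: "\<sigma> > 0 \<Longrightarrow> prob_space (gauss_mech \<sigma> v)"
  unfolding gauss_mech_eq_PiM by (rule prob_space_PiM) (rule prob_space_normal_density)

lemma gauss_mech_eq_density:
  assumes "\<sigma> > 0"
  shows "gauss_mech \<sigma> v = density (PiM {..<length v} (\<lambda>_. lborel))
           (\<lambda>x. ennreal (\<Prod>i<length v. normal_density (v!i) \<sigma> (x i)))"
  using assms by (simp add: gauss_mech_eq_PiM PiM_normal_measure_eq_density)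

lemma gauss_mech_measure_diff_le_likelihood_set:
  fixes v w :: "real list" and \<epsilon> :: real
  assumes len: "length w = length v" and sigma_pos: "\<sigma> > 0" and S: "S \<in> sets (gauss_mech \<sigma> v)"
  defines "A \<equiv> {x \<in> space (PiM {..<length v} (\<lambda>_. lborel)).
    exp \<epsilon> * (\<Prod>i<length v. normal_density (w!i) \<sigma> (x i)) < (\<Prod>i<length v. normal_density (v!i) \<sigma> (x i))}"
  shows "measure (gauss_mech \<sigma> v) S - exp \<epsilon> * measure (gauss_mech \<sigma> w) S
     \<le> measure (gauss_mech \<sigma> v) A - exp \<epsilon> * measure (gauss_mech \<sigma> w) A"
  using S unfolding A_def gauss_mech_eq_density[OF sigma_pos] len
  by (intro measure_density_diff_le_superlevel)
    (auto simp: sigma_pos integrable_prod_normal_density intro: prod_nonneg)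

lemma measure_gauss_mech_halfspace:
  assumes "\<sigma> > 0" and "0 < (\<Sum>i<length v. (u i)\<^sup>2)"
  shows "measure (gauss_mech \<sigma> v) {x \<in> space (PiM {..<length v} (\<lambda>_. lborel)). t < (\<Sum>i<length v. u i * x i)}
     = Phi (((\<Sum>i<length v. u i * v!i) - t) / (\<sigma> * sqrt (\<Sum>i<length v. (u i)\<^sup>2)))"
  using PiM_normal_measure_halfspace[where c="\<lambda>i. v!i" and t=t, OF assms]
  by (simp add: gauss_mech_eq_PiM[OF assms(1)] space_PiM)

lemma gauss_mech_measure_diff_le:
  fixes v w :: "real list"
  assumes len: "length w = length v" and sigma_pos: "\<sigma> > 0"
    and vw: "0 < (\<Sum>i<length v. (v!i - w!i)\<^sup>2)"
    and S: "S \<in> sets (gauss_mech \<sigma> v)"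
  shows "measure (gauss_mech \<sigma> v) S - exp \<epsilon> * measure (gauss_mech \<sigma> w) S
     \<le> gauss_delta \<epsilon> \<sigma> (sqrt (\<Sum>i<length v. (v!i - w!i)\<^sup>2))"
proof -
  define n where "n = length v"
  define u where "u i = v!i - w!i" for i
  define t where "t = \<sigma>\<^sup>2 * \<epsilon> + ((\<Sum>i<n. (v!i)\<^sup>2) - (\<Sum>i<n. (w!i)\<^sup>2)) / 2"
  define R where "R = (\<Sum>i<n. (u i)\<^sup>2)"
  have "R > 0" using vw by (simp add: R_def u_def n_def)
  \<comment> \<open>The likelihood ratio set is a halfspace orthogonal to u = v - w.\<close>
  define A where "A = {x \<in> space (PiM {..<n} (\<lambda>_. lborel)). t < (\<Sum>i<n. u i * x i)}"
  have "measure (gauss_mech \<sigma> v) S - exp \<epsilon> * measure (gauss_mech \<sigma> w) S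
      \<le> measure (gauss_mech \<sigma> v) A - exp \<epsilon> * measure (gauss_mech \<sigma> w) A"
    using gauss_mech_measure_diff_le_likelihood_set[OF len sigma_pos S, where \<epsilon>=\<epsilon>]
    by (simp add: prod_normal_density_less_iff[OF sigma_pos] A_def t_def u_def n_def)
  moreover have "(\<Sum>i<n. u i * v!i) - t = R / 2 - \<sigma>\<^sup>2 * \<epsilon>"
  proof -
    have "(\<Sum>i<n. u i * v!i - ((v!i)\<^sup>2 - (w!i)\<^sup>2) / 2) = R / 2"
      unfolding R_def sum_divide_distrib
      by (rule sum.cong) (simp_all add: u_def power2_eq_square field_simps)
    then show ?thesis by (simp add: t_def sum_subtractf sum_divide_distrib[symmetric])
  qed
  then have "measure (gauss_mech \<sigma> v) A = Phi ((R / 2 - \<sigma>\<^sup>2 * \<epsilon>) / (\<sigma> * sqrt R))"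
    using measure_gauss_mech_halfspace[where v=v and u=u and t=t] sigma_pos \<open>R > 0\<close> by (simp add: A_def R_def n_def)
  moreover have "(\<Sum>i<n. u i * w!i) - t = - R / 2 - \<sigma>\<^sup>2 * \<epsilon>"
  proof -
    have "(\<Sum>i<n. u i * w!i - ((v!i)\<^sup>2 - (w!i)\<^sup>2) / 2) = - R / 2"
      unfolding R_def sum_divide_distrib sum_negf[symmetric]
      by (rule sum.cong) (simp_all add: u_def power2_eq_square field_simps)
    then show ?thesis by (simp add: t_def sum_subtractf sum_divide_distrib[symmetric])
  qed
  then have "measure (gauss_mech \<sigma> w) A = Phi ((- R / 2 - \<sigma>\<^sup>2 * \<epsilon>) / (\<sigma> * sqrt R))"
    using measure_gauss_mech_halfspace[where v=w and u=u and t=t] sigma_pos \<open>R > 0\<close> len by (simp add: A_def R_def n_def)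
  moreover
  have "(R / 2 - \<sigma>\<^sup>2 * \<epsilon>) / (\<sigma> * sqrt R) = sqrt R / (2 * \<sigma>) - \<epsilon> * \<sigma> / sqrt R"
    and "(- R / 2 - \<sigma>\<^sup>2 * \<epsilon>) / (\<sigma> * sqrt R) = - sqrt R / (2 * \<sigma>) - \<epsilon> * \<sigma> / sqrt R"
    using \<open>R > 0\<close> sigma_pos real_sqrt_pow2[of R] by (simp_all add: field_simps power2_eq_square)
  moreover have "R = (\<Sum>i<length v. (v!i - w!i)\<^sup>2)" by (simp add: R_def u_def n_def)
  ultimately show ?thesis by (simp add: gauss_delta_def)
qed

\<comment> \<open>Both bounds come from the one-dimensional pair of means r and 0,
    tested on the empty set and on the whole space.\<close>
lemma
  assumes "\<sigma> > 0" and "r > 0"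
  shows gauss_delta_nonneg: "0 \<le> gauss_delta \<epsilon> \<sigma> r"
    and gauss_delta_ge_one_minus_exp: "1 - exp \<epsilon> \<le> gauss_delta \<epsilon> \<sigma> r"
proof -
  have bound: "measure (gauss_mech \<sigma> [r]) S - exp \<epsilon> * measure (gauss_mech \<sigma> [0]) S \<le> gauss_delta \<epsilon> \<sigma> r"
    if "S \<in> sets (gauss_mech \<sigma> [r])" for S
    using gauss_mech_measure_diff_le[of "[0]" "[r]" \<sigma> S \<epsilon>] that assms by simp
  show "0 \<le> gauss_delta \<epsilon> \<sigma> r" using bound[of "{}"] by simp
  interpret P: prob_space "gauss_mech \<sigma> [r]" by (rule prob_space_gauss_mech[OF assms(1)])
  interpret Q: prob_space "gauss_mech \<sigma> [0]" by (rule prob_space_gauss_mech[OF assms(1)])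
  have "space (gauss_mech \<sigma> [0]) = space (gauss_mech \<sigma> [r])" by (simp add: gauss_mech_def)
  then show "1 - exp \<epsilon> \<le> gauss_delta \<epsilon> \<sigma> r"
    using bound[of "space (gauss_mech \<sigma> [r])"] P.prob_space Q.prob_space by simp
qed

lemma gauss_mech_measure_diff_le_gauss_delta:
  fixes v w :: "real list"
  assumes len: "length w = length v" and sigma_pos: "\<sigma> > 0" and "\<Delta> > 0"
    and dist: "sqrt (\<Sum>i<length v. (v!i - w!i)\<^sup>2) \<le> \<Delta>"
    and S: "S \<in> sets (gauss_mech \<sigma> v)"
  shows "measure (gauss_mech \<sigma> v) S - exp \<epsilon> * measure (gauss_mech \<sigma> w) S \<le> gauss_delta \<epsilon> \<sigma> \<Delta>"
proof (cases "v = w")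
  case True
  interpret prob_space "gauss_mech \<sigma> v" by (rule prob_space_gauss_mech[OF sigma_pos])
  have "measure (gauss_mech \<sigma> v) S - exp \<epsilon> * measure (gauss_mech \<sigma> w) S = (1 - exp \<epsilon>) * prob S"
    unfolding True by (simp only: left_diff_distrib mult_1_left)
  also have "\<dots> \<le> max 0 (1 - exp \<epsilon>)"
  proof (cases "exp \<epsilon> \<le> 1")
    case True
    then show ?thesis using mult_right_le_one_le[of "1 - exp \<epsilon>" "prob S"] by simp
  next
    case False
    then show ?thesis using mult_nonpos_nonneg[of "1 - exp \<epsilon>" "prob S"] by simp
  qed
  also have "\<dots> \<le> gauss_delta \<epsilon> \<sigma> \<Delta>"
    using sigma_pos \<open>\<Delta> > 0\<close> by (intro max.boundedI gauss_delta_nonneg gauss_delta_ge_one_minus_exp)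
  finally show ?thesis .
next
  case False
  have "0 < (\<Sum>i<length v. (v!i - w!i)\<^sup>2)"
  proof (rule ccontr)
    assume "\<not> 0 < (\<Sum>i<length v. (v!i - w!i)\<^sup>2)"
    then have "(\<Sum>i<length v. (v!i - w!i)\<^sup>2) = 0"
      by (meson antisym not_less sum_nonneg zero_le_power2)
    then have "\<forall>i\<in>{..<length v}. (v!i - w!i)\<^sup>2 = 0"
      by (subst (asm) sum_nonneg_eq_0_iff) auto
    then have "v = w" using len by (intro nth_equalityI) auto
    with False show False ..
  qed
  then have "measure (gauss_mech \<sigma> v) S - exp \<epsilon> * measure (gauss_mech \<sigma> w) S
      \<le> gauss_delta \<epsilon> \<sigma> (sqrt (\<Sum>i<length v. (v!i - w!i)\<^sup>2))"
    by (rule gauss_mech_measure_diff_le[OF len sigma_pos _ S])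
  also have "\<dots> \<le> gauss_delta \<epsilon> \<sigma> \<Delta>"
    using \<open>0 < (\<Sum>i<length v. (v!i - w!i)\<^sup>2)\<close> by (intro gauss_delta_mono[OF sigma_pos _ dist]) simp
  finally show ?thesis .
qed

lemma DP_gauss_mech:
  fixes f :: "'a \<Rightarrow> real list"
  assumes "\<sigma> > 0" and "\<Delta> > 0" and "gauss_delta \<epsilon> \<sigma> \<Delta> \<le> \<delta>"
    and "\<And>r r'. r \<in> Rec \<Longrightarrow> r' \<in> Rec \<Longrightarrow> length (f r') = length (f r)"
    and "\<And>r r'. r \<in> Rec \<Longrightarrow> r' \<in> Rec \<Longrightarrow> sqrt (\<Sum>i<length (f r). (f r!i - f r'!i)\<^sup>2) \<le> \<Delta>"
  shows "DP Rec (\<lambda>r. gauss_mech \<sigma> (f r)) \<epsilon> \<delta>"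
  unfolding DP_def
proof (intro ballI)
  fix r r' S assume "r \<in> Rec" "r' \<in> Rec" "S \<in> sets (gauss_mech \<sigma> (f r))"
  then have "measure (gauss_mech \<sigma> (f r)) S - exp \<epsilon> * measure (gauss_mech \<sigma> (f r')) S
      \<le> gauss_delta \<epsilon> \<sigma> \<Delta>"
    using assms(1,2,4,5) by (intro gauss_mech_measure_diff_le_gauss_delta)
  then show "measure (gauss_mech \<sigma> (f r)) S \<le> exp \<epsilon> * measure (gauss_mech \<sigma> (f r')) S + \<delta>"
    using assms(3) by linarith
qed

section \<open>The sensitivity of the feature map\<close>

definition inner_list :: "real list \<Rightarrow> real list \<Rightarrow> real" where
  "inner_list l m = (\<Sum>(a, b)\<leftarrow>zip l m. a * b)"

lemma inner_list_append:
  "length l = length m \<Longrightarrow> inner_list (l @ l') (m @ m') = inner_list l m + inner_list l' m'"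
  by (simp add: inner_list_def)

lemma inner_list_map_mult:
  "inner_list (map (\<lambda>a. y * a) l) (map (\<lambda>b. z * b) m) = y * z * inner_list l m"
proof (induction l arbitrary: m)
  case (Cons a l)
  then show ?case by (cases m) (auto simp: inner_list_def algebra_simps)
qed (simp add: inner_list_def)

lemma inner_list_map: "inner_list (map f xs) (map g xs) = (\<Sum>x\<leftarrow>xs. f x * g x)"
  by (induction xs) (auto simp: inner_list_def)

lemma inner_list_concat:
  "(\<And>x. x \<in> set xs \<Longrightarrow> length (f x) = length (g x)) \<Longrightarrow>
     inner_list (concat (map f xs)) (concat (map g xs)) = (\<Sum>x\<leftarrow>xs. inner_list (f x) (g x))"
  by (induction xs) (auto simp: inner_list_def)

lemma sum_sq_diff_nth_eq_inner_list:
  assumes "length l = length m"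
  shows "(\<Sum>i<length l. (l!i - m!i)\<^sup>2) = inner_list l l + inner_list m m - 2 * inner_list l m"
proof -
  have inner: "inner_list a b = (\<Sum>i<length l. a!i * b!i)" if "length a = length l" "length b = length l" for a b
    using that by (simp add: inner_list_def sum_list_sum_nth atLeast0LessThan)
  show ?thesis
    using assms
    by (simp add: inner sum_subtractf[symmetric] sum.distrib[symmetric] sum_distrib_left
        power2_eq_square algebra_simps)
qed

lemma sum_upper_triangle_eq_square_sum:
  fixes a :: "nat \<Rightarrow> 'a::comm_semiring_1"
  shows "(\<Sum>i<d. \<Sum>j\<in>{i..<d}. if i = j then a i * a j else 2 * a i * a j) = (\<Sum>i<d. a i)\<^sup>2"
proof (induction d)
  case (Suc d)
  have "(\<Sum>i<Suc d. \<Sum>j\<in>{i..<Suc d}. if i = j then a i * a j else 2 * a i * a j)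
     = (\<Sum>i<Suc d. (\<Sum>j\<in>{i..<d}. if i = j then a i * a j else 2 * a i * a j)
         + (if i = d then a i * a d else 2 * a i * a d))"
    by (intro sum.cong refl) (auto simp: atLeastLessThanSuc add.commute)
  also have "\<dots> = (\<Sum>i<d. a i)\<^sup>2 + (\<Sum>i<d. 2 * a i * a d) + a d * a d"
    using Suc by (simp add: sum.distrib add.assoc)
  also have "\<dots> = (\<Sum>i<Suc d. a i)\<^sup>2"
    by (simp add: power2_eq_square algebra_simps sum_distrib_left sum_distrib_right mult_2_right sum.distrib)
  finally show ?case .
qed simp

lemma inner_list_t1: "inner_list (t1 d x) (t1 d x') = (\<Sum>i<d. x i * x' i)"
  by (simp add: t1_def inner_list_map sum_list_sum_nth atLeast0LessThan)

lemma inner_list_t2: "inner_list (t2 d x) (t2 d x') = (\<Sum>i<d. x i * x' i)\<^sup>2"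
proof -
  have "inner_list (t2 d x) (t2 d x') = (\<Sum>i\<leftarrow>[0..<d]. \<Sum>j\<leftarrow>[i..<d].
      (if i = j then (x i)\<^sup>2 else sqrt 2 * x i * x j) * (if i = j then (x' i)\<^sup>2 else sqrt 2 * x' i * x' j))"
    unfolding t2_def by (subst inner_list_concat) (auto simp: inner_list_map)
  also have "\<dots> = (\<Sum>i<d. \<Sum>j\<in>{i..<d}. if i = j then (x i * x' i) * (x j * x' j)
      else 2 * (x i * x' i) * (x j * x' j))"
    by (simp add: sum_set_upt_conv_sum_list_nat[symmetric] atLeast0LessThan power2_eq_square
        cong: if_cong) (auto intro!: sum.cong simp: algebra_simps)
  also have "\<dots> = (\<Sum>i<d. x i * x' i)\<^sup>2"
    by (rule sum_upper_triangle_eq_square_sum)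
  finally show ?thesis .
qed

lemma length_t2_eq: "length (t2 d x) = length (t2 d x')"
  by (simp add: t2_def length_concat comp_def)

lemma length_feature_eq: "length (feature d x y) = length (feature d x' y')"
  by (simp add: feature_def t1_def length_t2_eq[of d x x'])

lemma inner_list_feature:
  fixes d :: nat and x x' :: "nat \<Rightarrow> real" and y y' :: real
  defines "c \<equiv> \<Sum>i<d. x i * x' i"
  shows "inner_list (feature d x y) (feature d x' y') = (1 + y * y') * (c + c\<^sup>2)"
proof -
  have "length (t1 d x) = length (t1 d x')" by (simp add: t1_def)
  then have "inner_list (feature d x y) (feature d x' y') = c + c\<^sup>2 + y * y' * c + y * y' * c\<^sup>2"
    using length_t2_eq[of d x x']
    by (simp add: feature_def inner_list_append inner_list_map_mult inner_list_t1 inner_list_t2 c_def)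
  then show ?thesis by (simp add: algebra_simps)
qed

lemma feature_kernel_dist_le:
  fixes a b c y y' R :: real
  assumes "0 \<le> a" "a \<le> 1" "0 \<le> b" "b \<le> 1" "0 \<le> y" "y \<le> R" "0 \<le> y'" "y' \<le> R"
  shows "(1 + y\<^sup>2) * (a + a\<^sup>2) + (1 + y'\<^sup>2) * (b + b\<^sup>2) - 2 * ((1 + y * y') * (c + c\<^sup>2))
     \<le> 9/2 * (1 + R\<^sup>2)"
proof -
  have "y\<^sup>2 \<le> R\<^sup>2" "y'\<^sup>2 \<le> R\<^sup>2" "y * y' \<le> R\<^sup>2"
    using assms by (auto simp: power2_eq_square intro: mult_mono)
  have "a + a\<^sup>2 \<le> 2" "b + b\<^sup>2 \<le> 2"
    using assms power_le_one[of a 2] power_le_one[of b 2] by auto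
  have "(1 + y\<^sup>2) * (a + a\<^sup>2) \<le> (1 + R\<^sup>2) * 2"
    using \<open>y\<^sup>2 \<le> R\<^sup>2\<close> \<open>a + a\<^sup>2 \<le> 2\<close> assms by (intro mult_mono) auto
  have "(1 + y'\<^sup>2) * (b + b\<^sup>2) \<le> (1 + R\<^sup>2) * 2"
    using \<open>y'\<^sup>2 \<le> R\<^sup>2\<close> \<open>b + b\<^sup>2 \<le> 2\<close> assms by (intro mult_mono) auto
  have "- (c + c\<^sup>2) \<le> 1/4"
    using zero_le_power2[of "c + 1/2"] by (simp add: power2_eq_square algebra_simps)
  then have "(1 + y * y') * - (c + c\<^sup>2) \<le> (1 + y * y') * (1/4)"
    using assms by (intro mult_left_mono) auto
  also have "\<dots> \<le> (1 + R\<^sup>2) * (1/4)"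
    using \<open>y * y' \<le> R\<^sup>2\<close> by simp
  finally have "- ((1 + y * y') * (c + c\<^sup>2)) \<le> (1 + R\<^sup>2) * (1/4)"
    by (simp only: mult_minus_right)
  then show ?thesis
    using \<open>(1 + y\<^sup>2) * (a + a\<^sup>2) \<le> (1 + R\<^sup>2) * 2\<close> \<open>(1 + y'\<^sup>2) * (b + b\<^sup>2) \<le> (1 + R\<^sup>2) * 2\<close>
    by linarith
qed

lemma sum_sq_diff_feature_le:
  assumes "(\<Sum>i<d. (x i)\<^sup>2) \<le> 1" "(\<Sum>i<d. (x' i)\<^sup>2) \<le> 1"
    and "0 \<le> y" "y \<le> R" "0 \<le> y'" "y' \<le> R"
  shows "(\<Sum>i<length (feature d x y). (feature d x y!i - feature d x' y'!i)\<^sup>2) \<le> 9/2 * (1 + R\<^sup>2)"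
proof -
  let ?a = "\<Sum>i<d. (x i)\<^sup>2" and ?b = "\<Sum>i<d. (x' i)\<^sup>2" and ?c = "\<Sum>i<d. x i * x' i"
  have "(\<Sum>i<length (feature d x y). (feature d x y!i - feature d x' y'!i)\<^sup>2)
      = inner_list (feature d x y) (feature d x y) + inner_list (feature d x' y') (feature d x' y')
        - 2 * inner_list (feature d x y) (feature d x' y')"
    by (rule sum_sq_diff_nth_eq_inner_list) (rule length_feature_eq)
  also have "\<dots> = (1 + y\<^sup>2) * (?a + ?a\<^sup>2) + (1 + y'\<^sup>2) * (?b + ?b\<^sup>2) - 2 * ((1 + y * y') * (?c + ?c\<^sup>2))"
    by (simp add: inner_list_feature power2_eq_square)
  also have "\<dots> \<le> 9/2 * (1 + R\<^sup>2)"
    using assms by (intro feature_kernel_dist_le) (auto intro: sum_nonneg)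
  finally show ?thesis .
qed

theorem corollary2:
  fixes d :: nat and Ry \<sigma> \<epsilon> \<delta> :: real
  assumes "d \<ge> 1" and "Ry > 0" and "\<sigma> > 0"
    and "Phi (sqrt (9/2 * (1 + Ry\<^sup>2)) / (2 * \<sigma>) - \<epsilon> * \<sigma> / sqrt (9/2 * (1 + Ry\<^sup>2)))
         - exp \<epsilon> * Phi (- sqrt (9/2 * (1 + Ry\<^sup>2)) / (2 * \<sigma>) - \<epsilon> * \<sigma> / sqrt (9/2 * (1 + Ry\<^sup>2)))
         \<le> \<delta>"
  shows "DP (records d Ry) (\<lambda>(x, y). gauss_mech \<sigma> (feature d x y)) \<epsilon> \<delta>"
proof -
  define \<Delta> where "\<Delta> = sqrt (9/2 * (1 + Ry\<^sup>2))"
  have "\<Delta> > 0" unfolding \<Delta>_def by (simp add: add_pos_nonneg)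
  have "gauss_delta \<epsilon> \<sigma> \<Delta> \<le> \<delta>" using assms(4) by (simp add: gauss_delta_def \<Delta>_def)
  have "sqrt (\<Sum>i<length (feature d x y). (feature d x y!i - feature d x' y'!i)\<^sup>2) \<le> \<Delta>"
    if "(x, y) \<in> records d Ry" "(x', y') \<in> records d Ry" for x y x' y'
    using that unfolding \<Delta>_def
    by (intro real_sqrt_le_mono sum_sq_diff_feature_le) (auto simp: records_def elim: Nats_cases)
  then have "DP (records d Ry) (\<lambda>r. gauss_mech \<sigma> (case_prod (feature d) r)) \<epsilon> \<delta>"
    using \<open>\<sigma> > 0\<close> \<open>\<Delta> > 0\<close> \<open>gauss_delta \<epsilon> \<sigma> \<Delta> \<le> \<delta>\<close>
    by (intro DP_gauss_mech) (auto intro: length_feature_eq)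
  then show ?thesis by (simp add: case_prod_beta')
qed

end
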